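(* Let $n\geq2$, $m<0$, and let $\langle \sigma_{a_1}\cdots\sigma_{a_n}\rangle^{(m),+}$ and $\langle \sigma_{a_1}\cdots\sigma_{a_n}\rangle^{(-m),\mathtt{f}}$ be the full-plane scaling functions, and $\mathcal{C}=2^{1/6}e^{3\zeta'(-1)/2}$. Then $\mathcal{C}^n\langle \sigma_{a_1}\cdots\sigma_{a_n}\rangle^{(m),+}$ and $\mathcal{C}^n\langle \sigma_{a_1}\cdots\sigma_{a_n}\rangle^{(-m),\mathtt{f}}$ are rotationally invariant: for every $\phi\in\mathbb{R}$ and distinct $a_1,\ldots,a_n\in\mathbb{C}$, their values at $(e^{i\phi}a_1,\ldots,e^{i\phi}a_n)$ equal their values at $(a_1,\ldots,a_n)$.
   Context: Setting: $\Lambda=\Lambda_\delta$ is a $\delta$-isoradial lattice (every face inscribed in a circle of radius $\delta$; its dual $\Lambda^*$ is also $\delta$-isoradial), whose rhombus half-angles $\bar\theta_e\in(0,\pi/2)$ at primal vertices are uniformly bounded away from $0,\pi/2$. The Z-invariant Ising model with nome $q$ (elliptic modulus $k$, quarter period $K(k)$) assigns $\pm1$ spins to faces with weight $\prod_{e\in L(\sigma)}\tan(\hat\theta_e/2)$, $\sin\hat\theta_e=\operatorname{sn}(\tfrac{2K(k)}{\pi}\bar\theta_e|k)$, $L(\sigma)$ the set of edges separating unequal spins; $+$ denotes plus and $\mathtt{f}$ free boundary conditions, infinite-lattice expectations being infinite-volume limits. With nome $q=m\delta/2$ on $\Lambda$ (plus b.c.) and nome $-m\delta/2$ on $\Lambda^*$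 (free b.c.), the full-plane scaling functions are the functions for which, as $\delta\downarrow0$, $\delta^{-n/8}\mathbb{E}^{(m),+}_{\Lambda}[\sigma_{a_1}\cdots\sigma_{a_n}]\to \mathcal{C}^n\langle \sigma_{a_1}\cdots\sigma_{a_n}\rangle^{(m),+}$ and $\delta^{-n/8}\mathbb{E}^{(-m),\mathtt{f}}_{\Lambda^*}[\sigma_{a_1}\cdots\sigma_{a_n}]\to \mathcal{C}^n\langle \sigma_{a_1}\cdots\sigma_{a_n}\rangle^{(-m),\mathtt{f}}$, where $\sigma_a$ is the spin at a face near $a$. *)

theory Defs
  imports "HOL-Analysis.Analysis" "HOL-Complex_Analysis.Complex_Analysis"
begin

definition riemann_zeta :: "complex \<Rightarrow> complex" where
  "riemann_zeta = (THE f. f holomorphic_on (- {1}) \<and>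
       (\<forall>s. 1 < Re s \<longrightarrow> f s = (\<Sum>n. 1 / (of_nat (Suc n)) powr s)))"

definition ising_C :: real where
  "ising_C = 2 powr (1/6) * exp (3/2 * Re (deriv riemann_zeta (-1)))"

definition theta3 :: "real \<Rightarrow> real" where
  "theta3 q = 1 + 2 * (\<Sum>n. q ^ ((Suc n)^2))"

definition theta2_sum :: "real \<Rightarrow> real" where
  "theta2_sum q = (\<Sum>n. q ^ (n * (n + 1)))"

text \<open>Squared elliptic modulus k^2 as a function of the nome q: k^2 = theta2(q)^4/theta3(q)^4.\<close>
definition modsq_of_nome :: "real \<Rightarrow> real" where
  "modsq_of_nome q = 16 * q * (theta2_sum q) ^ 4 / (theta3 q) ^ 4"

text \<open>Incomplete elliptic integral of the first kind F(phi | M), M = k^2.\<close>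
definition ell_F :: "real \<Rightarrow> real \<Rightarrow> real" where
  "ell_F M \<phi> = integral {0..\<phi>} (\<lambda>t. 1 / sqrt (1 - M * (sin t)^2))"

definition ell_K :: "real \<Rightarrow> real" where
  "ell_K M = ell_F M (pi / 2)"

text \<open>Jacobi amplitude and sn (for nonnegative arguments, which is all we need).\<close>
definition jacobi_am :: "real \<Rightarrow> real \<Rightarrow> real" where
  "jacobi_am M u = (THE \<phi>. 0 \<le> \<phi> \<and> ell_F M \<phi> = u)"

definition jacobi_sn :: "real \<Rightarrow> real \<Rightarrow> real" where
  "jacobi_sn M u = sin (jacobi_am M u)"

definition zinv_weight :: "real \<Rightarrow> real \<Rightarrow> real" where
  "zinv_weight q \<theta> =
     (let M = modsq_of_nome q; K = ell_K M;
          th = arcsin (jacobi_sn M (2 * K / pi * \<theta>))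
      in tan (th / 2))"

text \<open>A tile (u, v, w, w') is the rhombus with primal vertices u, v (an edge of Lambda) and
  dual vertices w, w' (the dual edge, joining the centres of the two faces of Lambda
  separated by uv); its vertices in cyclic order are u, w, v, w'.\<close>
type_synonym tile = "complex \<times> complex \<times> complex \<times> complex"

fun tile_u :: "tile \<Rightarrow> complex" where "tile_u (u, v, w, w') = u"
fun tile_v :: "tile \<Rightarrow> complex" where "tile_v (u, v, w, w') = v"
fun tile_w :: "tile \<Rightarrow> complex" where "tile_w (u, v, w, w') = w"
fun tile_w' :: "tile \<Rightarrow> complex" where "tile_w' (u, v, w, w') = w'"

fun tile_verts :: "tile \<Rightarrow> complex set" where
  "tile_verts (u, v, w, w') = {u, v, w, w'}"

definition tile_hull :: "tile \<Rightarrow> complex set" where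
  "tile_hull t = convex hull (tile_verts t)"

fun rhombus_tile :: "real \<Rightarrow> tile \<Rightarrow> bool" where
  "rhombus_tile \<delta> (u, v, w, w') \<longleftrightarrow>
     cmod (u - w) = \<delta> \<and> cmod (w - v) = \<delta> \<and> cmod (v - w') = \<delta> \<and> cmod (w' - u) = \<delta> \<and>
     u \<noteq> v \<and> w \<noteq> w'"

text \<open>Half-angle bar theta_e of the rhombus at its primal vertex u.\<close>
definition half_angle :: "tile \<Rightarrow> real" where
  "half_angle t = arccos (cmod (tile_v t - tile_u t) / (2 * cmod (tile_w t - tile_u t)))"

definition primal_vertices :: "tile set \<Rightarrow> complex set" where
  "primal_vertices T = tile_u ` T \<union> tile_v ` T"

definition dual_vertices :: "tile set \<Rightarrow> complex set" where
  "dual_vertices T = tile_w ` T \<union> tile_w' ` T"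

text \<open>T is the rhombic embedding of a delta-isoradial lattice (and of its dual):
  an edge-to-edge, locally finite tiling of the plane by rhombi of side delta.\<close>
definition isoradial :: "real \<Rightarrow> tile set \<Rightarrow> bool" where
  "isoradial \<delta> T \<longleftrightarrow>
     0 < \<delta> \<and>
     (\<forall>t\<in>T. rhombus_tile \<delta> t) \<and>
     (\<forall>t1\<in>T. \<forall>t2\<in>T. t1 \<noteq> t2 \<longrightarrow>
         interior (tile_hull t1) \<inter> interior (tile_hull t2) = {}) \<and>
     (\<forall>t1\<in>T. \<forall>t2\<in>T. t1 \<noteq> t2 \<longrightarrow>
         tile_hull t1 \<inter> tile_hull t2 = convex hull (tile_verts t1 \<inter> tile_verts t2)) \<and>
     (\<Union>t\<in>T. tile_hull t) = UNIV \<and>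
     (\<forall>R. finite {t\<in>T. tile_hull t \<inter> cball 0 R \<noteq> {}}) \<and>
     primal_vertices T \<inter> dual_vertices T = {}"

definition angles_bounded :: "real \<Rightarrow> tile set \<Rightarrow> bool" where
  "angles_bounded \<eta> T \<longleftrightarrow> (\<forall>t\<in>T. \<eta> \<le> half_angle t \<and> half_angle t \<le> pi / 2 - \<eta>)"

definition configs :: "complex set \<Rightarrow> (complex \<Rightarrow> real) set" where
  "configs S = {\<sigma>. (\<forall>x\<in>S. \<sigma> x = 1 \<or> \<sigma> x = -1) \<and> (\<forall>x. x \<notin> S \<longrightarrow> \<sigma> x = 1)}"

text \<open>Lambda with plus boundary conditions: spins on faces of Lambda (dual vertices), +1 outside
  the window Dual(T) intersected with cball 0 R.\<close>
definition weight_plus :: "real \<Rightarrow> tile set \<Rightarrow> (complex \<Rightarrow> real) \<Rightarrow> real" where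
  "weight_plus q T \<sigma> = (\<Prod>t\<in>{t\<in>T. \<sigma> (tile_w t) \<noteq> \<sigma> (tile_w' t)}. zinv_weight q (half_angle t))"

definition corr_plus_fin :: "real \<Rightarrow> tile set \<Rightarrow> real \<Rightarrow> complex list \<Rightarrow> real" where
  "corr_plus_fin q T R fs =
     (let C = configs (dual_vertices T \<inter> cball 0 R)
      in (\<Sum>\<sigma>\<in>C. weight_plus q T \<sigma> * prod_list (map \<sigma> fs)) / (\<Sum>\<sigma>\<in>C. weight_plus q T \<sigma>))"

definition E_plus :: "real \<Rightarrow> tile set \<Rightarrow> complex list \<Rightarrow> real" where
  "E_plus q T fs = Lim at_top (\<lambda>R. corr_plus_fin q T R fs)"

text \<open>Lambda* with free boundary conditions: spins on faces of Lambda* (primal vertices of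
  Lambda); only edges with both endpoints in the window interact. The half-angle of a rhombus
  at its primal vertex for Lambda* (i.e. at w) is pi/2 - bar theta_e.\<close>
definition weight_free :: "real \<Rightarrow> tile set \<Rightarrow> real \<Rightarrow> (complex \<Rightarrow> real) \<Rightarrow> real" where
  "weight_free q T R \<sigma> =
     (\<Prod>t\<in>{t\<in>T. tile_u t \<in> cball 0 R \<and> tile_v t \<in> cball 0 R \<and> \<sigma> (tile_u t) \<noteq> \<sigma> (tile_v t)}.
        zinv_weight q (pi / 2 - half_angle t))"

definition corr_free_fin :: "real \<Rightarrow> tile set \<Rightarrow> real \<Rightarrow> complex list \<Rightarrow> real" where
  "corr_free_fin q T R fs =
     (let C = configs (primal_vertices T \<inter> cball 0 R)
      in (\<Sum>\<sigma>\<in>C. weight_free q T R \<sigma> * prod_list (map \<sigma> fs)) / (\<Sum>\<sigma>\<in>C. weight_free q T R \<sigma>))"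

definition E_free :: "real \<Rightarrow> tile set \<Rightarrow> complex list \<Rightarrow> real" where
  "E_free q T fs = Lim at_top (\<lambda>R. corr_free_fin q T R fs)"

text \<open>F is the full-plane scaling function for Lambda with nome m delta/2 and plus b.c.: for
  distinct points a_1..a_n, every family of delta-isoradial lattices with uniformly bounded
  half-angles and every choice of faces of Lambda_delta within distance delta of the a_j
  (e.g. the faces containing them), delta^{-n/8} E[...] tends to C^n F(a).\<close>
definition plus_scaling_fn :: "real \<Rightarrow> nat \<Rightarrow> (complex list \<Rightarrow> real) \<Rightarrow> bool" where
  "plus_scaling_fn m n F \<longleftrightarrow>
     (\<forall>a. length a = n \<and> distinct a \<longrightarrow>
       (\<forall>\<eta> L f. 0 < \<eta> \<and> (\<forall>\<delta>>0. isoradial \<delta> (L \<delta>) \<and> angles_bounded \<eta> (L \<delta>)) \<and>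
          (\<forall>\<delta>>0. length (f \<delta>) = n \<and>
             (\<forall>j<n. f \<delta> ! j \<in> dual_vertices (L \<delta>) \<and> cmod (f \<delta> ! j - a ! j) \<le> \<delta>)) \<longrightarrow>
          ((\<lambda>\<delta>. \<delta> powr (- (real n / 8)) * E_plus (m * \<delta> / 2) (L \<delta>) (f \<delta>))
             \<longlongrightarrow> ising_C ^ n * F a) (at_right 0)))"

definition free_scaling_fn :: "real \<Rightarrow> nat \<Rightarrow> (complex list \<Rightarrow> real) \<Rightarrow> bool" where
  "free_scaling_fn m n G \<longleftrightarrow>
     (\<forall>a. length a = n \<and> distinct a \<longrightarrow>
       (\<forall>\<eta> L f. 0 < \<eta> \<and> (\<forall>\<delta>>0. isoradial \<delta> (L \<delta>) \<and> angles_bounded \<eta> (L \<delta>)) \<and>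
          (\<forall>\<delta>>0. length (f \<delta>) = n \<and>
             (\<forall>j<n. f \<delta> ! j \<in> primal_vertices (L \<delta>) \<and> cmod (f \<delta> ! j - a ! j) \<le> \<delta>)) \<longrightarrow>
          ((\<lambda>\<delta>. \<delta> powr (- (real n / 8)) * E_free (- m * \<delta> / 2) (L \<delta>) (f \<delta>))
             \<longlongrightarrow> ising_C ^ n * G a) (at_right 0)))"

end

theory Submission
  imports Defs
begin

(* The scaling functions are characterised by limits that hold for every admissible family of
   isoradial lattices and every choice of faces near the points a_j. Rotating such a family about
   the origin, together with the chosen faces, yields an admissible family for the rotated points,
   and it leaves every finite-volume correlation unchanged: the Z-invariant weights depend only on
   the rhombus angles, and the observation window is a disc centred at 0. Hence the limits at
   (e^{i phi} a_j) and at (a_j) are limits of the same function of delta, so they agree, provided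
   one admissible family exists at all; the square lattice scaled by delta is one. *)

fun map_tile :: "(complex \<Rightarrow> complex) \<Rightarrow> tile \<Rightarrow> tile" where
  "map_tile f (u, v, w, w') = (f u, f v, f w, f w')"

lemma map_tile_simps [simp]:
  "tile_u (map_tile f t) = f (tile_u t)" "tile_v (map_tile f t) = f (tile_v t)"
  "tile_w (map_tile f t) = f (tile_w t)" "tile_w' (map_tile f t) = f (tile_w' t)"
  "tile_verts (map_tile f t) = f ` tile_verts t"
  by (cases t; simp)+

lemma inj_map_tile: "inj f \<Longrightarrow> inj (map_tile f)"
  by (auto simp: inj_def)

lemma tile_hull_map_tile: "linear f \<Longrightarrow> tile_hull (map_tile f t) = f ` tile_hull t"
  by (simp add: tile_hull_def convex_hull_linear_image)

lemma primal_vertices_map_tile: "primal_vertices (map_tile f ` T) = f ` primal_vertices T"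
  by (auto simp: primal_vertices_def image_image image_Un)

lemma dual_vertices_map_tile: "dual_vertices (map_tile f ` T) = f ` dual_vertices T"
  by (auto simp: dual_vertices_def image_image image_Un)

lemma linear_mult_left: "linear ((*) (c::complex))"
  by (simp add: bounded_linear.linear bounded_linear_mult_right)

lemma surj_mult_left: "c \<noteq> (0::complex) \<Longrightarrow> surj ((*) c)"
  by (rule surjI[of _ "\<lambda>z. z / c"]) simp

lemma half_angle_scale: "c \<noteq> 0 \<Longrightarrow> half_angle (map_tile ((*) c) t) = half_angle t"
  by (simp add: half_angle_def right_diff_distrib[symmetric] norm_mult)

lemma rhombus_tile_scale:
  "c \<noteq> 0 \<Longrightarrow> rhombus_tile (cmod c * \<delta>) (map_tile ((*) c) t) = rhombus_tile \<delta> t"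
  by (cases t) (simp add: right_diff_distrib[symmetric] norm_mult)

lemma angles_bounded_scale:
  "c \<noteq> 0 \<Longrightarrow> angles_bounded \<eta> (map_tile ((*) c) ` T) = angles_bounded \<eta> T"
  by (simp add: angles_bounded_def half_angle_scale)

lemma isoradial_scale:
  assumes c: "c \<noteq> 0" and iso: "isoradial \<delta> T"
  shows "isoradial (cmod c * \<delta>) (map_tile ((*) c) ` T)"
proof -
  let ?r = "(*) c" and ?T = "map_tile ((*) c) ` T"
  have inj: "inj ?r" and lin: "linear ?r" using c by (simp_all add: linear_mult_left)
  have inj_tile: "inj (map_tile ?r)" using inj by (rule inj_map_tile)
  have rhombi: "\<forall>t\<in>?T. rhombus_tile (cmod c * \<delta>) t"
    using iso c by (simp add: isoradial_def rhombus_tile_scale)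
  have interiors: "\<forall>t1\<in>?T. \<forall>t2\<in>?T. t1 \<noteq> t2 \<longrightarrow>
      interior (tile_hull t1) \<inter> interior (tile_hull t2) = {}"
    using iso inj_tile unfolding isoradial_def
    by (simp add: inj_eq tile_hull_map_tile[OF lin] interior_injective_linear_image[OF lin inj]
        image_Int[OF inj, symmetric])
  have edges: "\<forall>t1\<in>?T. \<forall>t2\<in>?T. t1 \<noteq> t2 \<longrightarrow>
      tile_hull t1 \<inter> tile_hull t2 = convex hull (tile_verts t1 \<inter> tile_verts t2)"
    using iso inj_tile unfolding isoradial_def
    by (simp add: inj_eq tile_hull_map_tile[OF lin] image_Int[OF inj, symmetric]
        convex_hull_linear_image[OF lin, symmetric])
  have cover: "(\<Union>t\<in>?T. tile_hull t) = UNIV"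
    using iso surj_mult_left[OF c]
    by (simp add: isoradial_def tile_hull_map_tile[OF lin] image_UN[symmetric])
  have meets_cball: "tile_hull (map_tile ?r t) \<inter> cball 0 R \<noteq> {} \<Longrightarrow>
      tile_hull t \<inter> cball 0 (R / cmod c) \<noteq> {}" for t R
    using c by (auto simp: tile_hull_map_tile[OF lin] norm_mult field_simps)
  have locally_finite: "finite {t \<in> ?T. tile_hull t \<inter> cball 0 R \<noteq> {}}" for R
  proof (rule finite_subset)
    show "{t \<in> ?T. tile_hull t \<inter> cball 0 R \<noteq> {}} \<subseteq>
        map_tile ?r ` {t \<in> T. tile_hull t \<inter> cball 0 (R / cmod c) \<noteq> {}}"
      using meets_cball by blast
  qed (use iso in \<open>simp add: isoradial_def\<close>)
  have disjoint: "primal_vertices ?T \<inter> dual_vertices ?T = {}"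
    using iso by (simp add: isoradial_def primal_vertices_map_tile dual_vertices_map_tile
        image_Int[OF inj, symmetric])
  have pos: "0 < cmod c * \<delta>" using iso c by (simp add: isoradial_def)
  show ?thesis unfolding isoradial_def
    by (intro conjI allI pos rhombi interiors edges cover locally_finite disjoint)
qed

definition plane_net :: "real \<Rightarrow> complex set \<Rightarrow> bool" where
  "plane_net r S \<longleftrightarrow> (\<forall>p. \<exists>z\<in>S. cmod (z - p) \<le> r)"

lemma plane_net_scale:
  assumes c: "c \<noteq> 0" and net: "plane_net r S"
  shows "plane_net (cmod c * r) ((*) c ` S)"
  unfolding plane_net_def
proof
  fix p
  obtain z where z: "z \<in> S" "cmod (z - p / c) \<le> r"
    using net by (auto simp: plane_net_def)
  have "cmod (c * z - p) = cmod c * cmod (z - p / c)"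
    using c by (simp add: norm_mult[symmetric] right_diff_distrib)
  also have "\<dots> \<le> cmod c * r"
    using z by (simp add: mult_left_mono)
  finally show "\<exists>z\<in>(*) c ` S. cmod (z - p) \<le> cmod c * r"
    using z by blast
qed

lemma comp_in_configs_iff:
  assumes "\<And>z. r' (r z) = z" and "\<And>z. r (r' z) = z"
  shows "\<sigma> \<circ> r \<in> configs S \<longleftrightarrow> \<sigma> \<in> configs (r ` S)"
  unfolding configs_def using assms by (auto simp: image_iff) metis+

lemma sum_configs_image:
  assumes "\<And>z. r' (r z) = z" and "\<And>z. r (r' z) = z"
  shows "(\<Sum>\<sigma>\<in>configs (r ` S). h \<sigma>) = (\<Sum>\<sigma>\<in>configs S. h (\<sigma> \<circ> r'))"
proof (rule sum.reindex_bij_witness[of _ "\<lambda>\<sigma>. \<sigma> \<circ> r'" "\<lambda>\<sigma>. \<sigma> \<circ> r"])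
  fix \<sigma> assume "\<sigma> \<in> configs S"
  then show "\<sigma> \<circ> r' \<circ> r = \<sigma>" "\<sigma> \<circ> r' \<in> configs (r ` S)"
    using assms comp_in_configs_iff[OF assms, of "\<sigma> \<circ> r'"] by (simp_all add: comp_def)
next
  fix \<sigma> assume "\<sigma> \<in> configs (r ` S)"
  then show "\<sigma> \<circ> r \<circ> r' = \<sigma>" "\<sigma> \<circ> r \<in> configs S" "h (\<sigma> \<circ> r \<circ> r') = h \<sigma>"
    using assms comp_in_configs_iff[OF assms] by (simp_all add: comp_def)
qed

lemma corr_plus_fin_rotate:
  assumes c: "cmod c = 1"
  shows "corr_plus_fin q (map_tile ((*) c) ` T) R (map ((*) c) fs) = corr_plus_fin q T R fs"
proof -
  let ?r = "(*) c" and ?r' = "(*) (inverse c)" and ?T = "map_tile ((*) c) ` T"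
  have c0: "c \<noteq> 0" using c by auto
  have r'_r: "?r' (?r z) = z" and r_r': "?r (?r' z) = z" for z
    using c0 by (simp_all add: mult.assoc[symmetric])
  have window: "dual_vertices ?T \<inter> cball 0 R = ?r ` (dual_vertices T \<inter> cball 0 R)"
    using c by (auto simp: dual_vertices_map_tile norm_mult)
  have weight: "weight_plus q ?T (\<sigma> \<circ> ?r') = weight_plus q T \<sigma>" for \<sigma>
  proof -
    have "{t \<in> ?T. (\<sigma> \<circ> ?r') (tile_w t) \<noteq> (\<sigma> \<circ> ?r') (tile_w' t)} =
        map_tile ?r ` {t \<in> T. \<sigma> (tile_w t) \<noteq> \<sigma> (tile_w' t)}"
      by (auto simp: r'_r)
    then show ?thesis
      using c0 by (simp add: weight_plus_def prod.reindex inj_on_subset[OF inj_map_tile]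
          half_angle_scale)
  qed
  show ?thesis
    unfolding corr_plus_fin_def Let_def window sum_configs_image[OF r'_r r_r'] weight
    by (simp add: comp_def r'_r)
qed

lemma corr_free_fin_rotate:
  assumes c: "cmod c = 1"
  shows "corr_free_fin q (map_tile ((*) c) ` T) R (map ((*) c) fs) = corr_free_fin q T R fs"
proof -
  let ?r = "(*) c" and ?r' = "(*) (inverse c)" and ?T = "map_tile ((*) c) ` T"
  have c0: "c \<noteq> 0" using c by auto
  have r'_r: "?r' (?r z) = z" and r_r': "?r (?r' z) = z" for z
    using c0 by (simp_all add: mult.assoc[symmetric])
  have window: "primal_vertices ?T \<inter> cball 0 R = ?r ` (primal_vertices T \<inter> cball 0 R)"
    using c by (auto simp: primal_vertices_map_tile norm_mult)
  have weight: "weight_free q ?T R (\<sigma> \<circ> ?r') = weight_free q T R \<sigma>" for \<sigma>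
  proof -
    have "{t \<in> ?T. tile_u t \<in> cball 0 R \<and> tile_v t \<in> cball 0 R \<and>
            (\<sigma> \<circ> ?r') (tile_u t) \<noteq> (\<sigma> \<circ> ?r') (tile_v t)} =
        map_tile ?r ` {t \<in> T. tile_u t \<in> cball 0 R \<and> tile_v t \<in> cball 0 R \<and>
            \<sigma> (tile_u t) \<noteq> \<sigma> (tile_v t)}"
      using c by (auto simp: r'_r norm_mult)
    then show ?thesis
      using c0 by (simp add: weight_free_def prod.reindex inj_on_subset[OF inj_map_tile]
          half_angle_scale)
  qed
  show ?thesis
    unfolding corr_free_fin_def Let_def window sum_configs_image[OF r'_r r_r'] weight
    by (simp add: comp_def r'_r)
qed

lemma E_plus_rotate:
  "cmod c = 1 \<Longrightarrow> E_plus q (map_tile ((*) c) ` T) (map ((*) c) fs) = E_plus q T fs"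
  by (simp add: E_plus_def corr_plus_fin_rotate)

lemma E_free_rotate:
  "cmod c = 1 \<Longrightarrow> E_free q (map_tile ((*) c) ` T) (map ((*) c) fs) = E_free q T fs"
  by (simp add: E_free_def corr_free_fin_rotate)

definition lattice_point :: "int \<Rightarrow> int \<Rightarrow> complex" where
  "lattice_point i j = Complex (of_int i) (of_int j)"

definition square_tile :: "int \<Rightarrow> int \<Rightarrow> tile" where
  "square_tile i j =
     (if even (i + j)
      then (lattice_point i j, lattice_point (i + 1) (j + 1),
            lattice_point (i + 1) j, lattice_point i (j + 1))
      else (lattice_point (i + 1) j, lattice_point i (j + 1),
            lattice_point i j, lattice_point (i + 1) (j + 1)))"

definition square_lattice :: "tile set" where
  "square_lattice = range (case_prod square_tile)"

definition complex_of_pair :: "real \<times> real \<Rightarrow> complex" where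
  "complex_of_pair = (\<lambda>(x, y). Complex x y)"

lemma linear_complex_of_pair: "linear complex_of_pair"
  by (rule linearI) (auto simp: complex_of_pair_def complex_eq_iff)

lemma bij_complex_of_pair: "bij complex_of_pair"
  by (rule bijI') (auto simp: complex_of_pair_def complex_eq_iff intro: exI[of _ "(Re _, Im _)"])

lemma lattice_point_eq_iff: "lattice_point i j = lattice_point i' j' \<longleftrightarrow> i = i' \<and> j = j'"
  by (simp add: lattice_point_def)

lemma convex_hull_int_ends: "convex hull {real_of_int i, of_int i + 1} = {of_int i..of_int i + 1}"
  by (simp add: segment_convex_hull[symmetric] closed_segment_eq_real_ivl)

lemma tile_verts_square_tile:
  "tile_verts (square_tile i j) =
     complex_of_pair ` ({of_int i, of_int i + 1} \<times> {of_int j, of_int j + 1})"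
  by (auto simp: square_tile_def lattice_point_def complex_of_pair_def)

lemma tile_hull_square_tile:
  "tile_hull (square_tile i j) =
     complex_of_pair ` ({of_int i..of_int i + 1} \<times> {of_int j..of_int j + 1})"
  by (simp only: tile_hull_def tile_verts_square_tile
      convex_hull_linear_image[OF linear_complex_of_pair, symmetric] convex_hull_Times
      convex_hull_int_ends)

lemma int_unit_intervals_Int:
  fixes i k :: int
  shows "{of_int i..of_int i + 1} \<inter> {of_int k..of_int k + 1} =
    convex hull ({real_of_int i, of_int i + 1} \<inter> {of_int k, of_int k + 1})"
proof -
  consider "k = i" | "k = i + 1" | "i = k + 1" | "k + 1 < i \<or> i + 1 < k" by linarith
  then show ?thesis
  proof cases
    case 1
    then show ?thesis by (simp add: convex_hull_int_ends)
  next
    case 2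
    then have "{of_int i..of_int i + 1} \<inter> {of_int k..of_int k + 1} = {real_of_int i + 1}"
      and "{real_of_int i, of_int i + 1} \<inter> {of_int k, of_int k + 1} = {of_int i + 1}"
      by auto
    then show ?thesis by simp
  next
    case 3
    then have "{of_int i..of_int i + 1} \<inter> {of_int k..of_int k + 1} = {real_of_int k + 1}"
      and "{real_of_int i, of_int i + 1} \<inter> {of_int k, of_int k + 1} = {of_int k + 1}"
      by auto
    then show ?thesis by simp
  next
    case 4
    then have "real_of_int k + 1 < of_int i \<or> real_of_int i + 1 < of_int k"
      by (metis of_int_1 of_int_add of_int_less_iff)
    then show ?thesis by auto
  qed
qed

lemma int_unit_open_intervals_disjoint:
  fixes i k :: int
  assumes "i \<noteq> k"
  shows "{of_int i<..<of_int i + 1} \<inter> {of_int k<..<of_int k + 1} = ({} :: real set)"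
proof -
  have "real_of_int i < of_int k + 1 \<Longrightarrow> real_of_int k < of_int i + 1 \<Longrightarrow> i = k"
    by (metis of_int_1 of_int_add of_int_less_iff zless_add1_eq less_asym')
  then show ?thesis using assms by auto
qed

lemma interior_tile_hull_square_tile:
  "interior (tile_hull (square_tile i j)) =
     complex_of_pair ` ({of_int i<..<of_int i + 1} \<times> {of_int j<..<of_int j + 1})"
  by (simp add: tile_hull_square_tile interior_Times
      interior_bijective_linear_image[OF linear_complex_of_pair bij_complex_of_pair])

lemma square_tile_interiors_disjoint:
  assumes "(i, j) \<noteq> (i', j')"
  shows "interior (tile_hull (square_tile i j)) \<inter> interior (tile_hull (square_tile i' j')) = {}"
  using assms int_unit_open_intervals_disjoint[of i i'] int_unit_open_intervals_disjoint[of j j']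
  by (auto simp: interior_tile_hull_square_tile image_Int[OF bij_is_inj[OF bij_complex_of_pair],
        symmetric] Times_Int_Times)

lemma square_tiles_edge_to_edge:
  "tile_hull (square_tile i j) \<inter> tile_hull (square_tile i' j') =
     convex hull (tile_verts (square_tile i j) \<inter> tile_verts (square_tile i' j'))"
  by (simp only: tile_hull_square_tile tile_verts_square_tile
      image_Int[OF bij_is_inj[OF bij_complex_of_pair], symmetric] Times_Int_Times
      int_unit_intervals_Int convex_hull_Times[symmetric]
      convex_hull_linear_image[OF linear_complex_of_pair])

lemma unit_cell_index_bounded:
  fixes x R :: real
  assumes "of_int i \<le> x" "x \<le> of_int i + 1" "\<bar>x\<bar> \<le> R"
  shows "i \<in> {- \<lceil>R\<rceil> - 1..\<lceil>R\<rceil>}"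
proof -
  have "of_int i \<le> R" "- R - 1 \<le> of_int i" using assms by linarith+
  then show ?thesis by (simp add: le_ceiling_iff) linarith
qed

lemma rhombus_tile_square_tile: "rhombus_tile 1 (square_tile i j)"
  by (simp add: square_tile_def lattice_point_def norm_complex_def)

definition parity_sublattice :: "bool \<Rightarrow> complex set" where
  "parity_sublattice b = {lattice_point i j | i j. even (i + j) = b}"

lemma lattice_point_in_parity_sublattice [simp]:
  "lattice_point i j \<in> parity_sublattice b \<longleftrightarrow> even (i + j) = b"
  by (auto simp: parity_sublattice_def lattice_point_eq_iff)

lemma primal_vertices_square_lattice: "primal_vertices square_lattice = parity_sublattice True"
proof
  show "primal_vertices square_lattice \<subseteq> parity_sublattice True"
    by (auto simp: primal_vertices_def square_lattice_def square_tile_def)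
  show "parity_sublattice True \<subseteq> primal_vertices square_lattice"
  proof
    fix z assume "z \<in> parity_sublattice True"
    then obtain i j where "z = lattice_point i j" "even (i + j)"
      by (auto simp: parity_sublattice_def)
    then have "z = tile_u (square_tile i j)" by (simp add: square_tile_def)
    then show "z \<in> primal_vertices square_lattice"
      by (auto simp: primal_vertices_def square_lattice_def)
  qed
qed

lemma dual_vertices_square_lattice: "dual_vertices square_lattice = parity_sublattice False"
proof
  show "dual_vertices square_lattice \<subseteq> parity_sublattice False"
    by (auto simp: dual_vertices_def square_lattice_def square_tile_def)
  show "parity_sublattice False \<subseteq> dual_vertices square_lattice"
  proof
    fix z assume "z \<in> parity_sublattice False"
    then obtain i j where "z = lattice_point i j" "odd (i + j)"
      by (auto simp: parity_sublattice_def)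
    then have "z = tile_w (square_tile i j)" by (simp add: square_tile_def)
    then show "z \<in> dual_vertices square_lattice"
      by (auto simp: dual_vertices_def square_lattice_def)
  qed
qed

lemma finite_square_tiles_meeting_cball:
  "finite {t \<in> square_lattice. tile_hull t \<inter> cball 0 R \<noteq> {}}"
proof (rule finite_subset)
  let ?I = "{- \<lceil>R\<rceil> - 1..\<lceil>R\<rceil>}"
  show "{t \<in> square_lattice. tile_hull t \<inter> cball 0 R \<noteq> {}} \<subseteq>
      case_prod square_tile ` (?I \<times> ?I)"
  proof
    fix t assume "t \<in> {t \<in> square_lattice. tile_hull t \<inter> cball 0 R \<noteq> {}}"
    then obtain i j z where t: "t = square_tile i j"
      and z: "z \<in> tile_hull (square_tile i j)" "cmod z \<le> R"
      by (auto simp: square_lattice_def) blast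
    then obtain x y where "z = Complex x y" "of_int i \<le> x" "x \<le> of_int i + 1"
        "of_int j \<le> y" "y \<le> of_int j + 1" "\<bar>x\<bar> \<le> R" "\<bar>y\<bar> \<le> R"
      using abs_Re_le_cmod[of z] abs_Im_le_cmod[of z]
      by (fastforce simp: tile_hull_square_tile complex_of_pair_def)
    then show "t \<in> case_prod square_tile ` (?I \<times> ?I)"
      using unit_cell_index_bounded t by blast
  qed
qed simp

lemma isoradial_square_lattice: "isoradial 1 square_lattice"
proof -
  have cover: "z \<in> tile_hull (square_tile \<lfloor>Re z\<rfloor> \<lfloor>Im z\<rfloor>)" for z
  proof -
    have "z = complex_of_pair (Re z, Im z)" by (simp add: complex_of_pair_def)
    then show ?thesis by (auto simp: tile_hull_square_tile)
  qed
  have "\<forall>t\<in>square_lattice. rhombus_tile 1 t"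
    by (auto simp: square_lattice_def rhombus_tile_square_tile)
  moreover have "\<forall>t1\<in>square_lattice. \<forall>t2\<in>square_lattice. t1 \<noteq> t2 \<longrightarrow>
      interior (tile_hull t1) \<inter> interior (tile_hull t2) = {}"
  proof (intro ballI impI)
    fix t1 t2 assume "t1 \<in> square_lattice" "t2 \<in> square_lattice" "t1 \<noteq> t2"
    then obtain i j i' j'
      where "t1 = square_tile i j" "t2 = square_tile i' j'" "(i, j) \<noteq> (i', j')"
      by (auto simp: square_lattice_def)
    then show "interior (tile_hull t1) \<inter> interior (tile_hull t2) = {}"
      using square_tile_interiors_disjoint by simp
  qed
  moreover have "\<forall>t1\<in>square_lattice. \<forall>t2\<in>square_lattice. t1 \<noteq> t2 \<longrightarrow>
      tile_hull t1 \<inter> tile_hull t2 = convex hull (tile_verts t1 \<inter> tile_verts t2)"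
    by (auto simp: square_lattice_def square_tiles_edge_to_edge simp del: tile_verts.simps)
  moreover have "(\<Union>t\<in>square_lattice. tile_hull t) = UNIV"
    using cover by (auto simp: square_lattice_def) blast
  moreover have "primal_vertices square_lattice \<inter> dual_vertices square_lattice = {}"
    by (auto simp: primal_vertices_square_lattice dual_vertices_square_lattice
        parity_sublattice_def lattice_point_eq_iff)
  ultimately show ?thesis by (simp add: isoradial_def finite_square_tiles_meeting_cball)
qed

lemma half_angle_square_tile: "half_angle (square_tile i j) = pi / 4"
proof -
  have "cmod (tile_v (square_tile i j) - tile_u (square_tile i j)) = sqrt 2"
    and "cmod (tile_w (square_tile i j) - tile_u (square_tile i j)) = 1"
    by (auto simp: square_tile_def lattice_point_def norm_complex_def)
  then have "half_angle (square_tile i j) = arccos (cos (pi / 4))"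
    by (simp add: half_angle_def cos_45)
  then show ?thesis by (simp add: arccos_cos)
qed

lemma angles_bounded_square_lattice: "angles_bounded (pi / 4) square_lattice"
  by (simp add: angles_bounded_def square_lattice_def half_angle_square_tile)

lemma power2_add_power2_one_minus_le_one:
  "0 \<le> s \<Longrightarrow> s \<le> 1 \<Longrightarrow> s\<^sup>2 + (1 - s)\<^sup>2 \<le> (1::real)"
  by (simp add: power2_eq_square algebra_simps mult_left_le)

lemma plane_net_parity_sublattice: "plane_net 1 (parity_sublattice b)"
  unfolding plane_net_def
proof
  fix p
  define x y where "x = \<lfloor>Re p\<rfloor>" and "y = \<lfloor>Im p\<rfloor>"
  define s t where "s = Re p - of_int x" and "t = Im p - of_int y"
  define e :: int where "e = (if even (x + y) = b then 0 else 1)"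
  have st: "0 \<le> s" "s \<le> 1" "0 \<le> t" "t \<le> 1"
    unfolding s_def t_def x_def y_def by linarith+
  have sq_dist:
    "(cmod (lattice_point a c - p))\<^sup>2 = (of_int a - Re p)\<^sup>2 + (of_int c - Im p)\<^sup>2" for a c
    by (simp add: cmod_power2 lattice_point_def)
  \<comment> \<open>?A and ?B are the opposite corners of parity b of the unit cell containing p\<close>
  let ?A = "lattice_point (x + e) y" and ?B = "lattice_point (x + 1 - e) (y + 1)"
  have "(cmod (?A - p))\<^sup>2 + (cmod (?B - p))\<^sup>2 =
      ((of_int e - s)\<^sup>2 + (1 - of_int e - s)\<^sup>2) + (t\<^sup>2 + (1 - t)\<^sup>2)"
    unfolding sq_dist s_def t_def by (simp add: power2_eq_square algebra_simps)
  also have "\<dots> = (s\<^sup>2 + (1 - s)\<^sup>2) + (t\<^sup>2 + (1 - t)\<^sup>2)"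
    by (simp add: e_def power2_eq_square algebra_simps)
  also have "\<dots> \<le> 2"
    using power2_add_power2_one_minus_le_one[of s] power2_add_power2_one_minus_le_one[of t] st
    by linarith
  finally have "(cmod (?A - p))\<^sup>2 \<le> 1 \<or> (cmod (?B - p))\<^sup>2 \<le> 1"
    by linarith
  then have "cmod (?A - p) \<le> 1 \<or> cmod (?B - p) \<le> 1"
    by (simp add: power_le_one_iff)
  moreover have "?A \<in> parity_sublattice b" "?B \<in> parity_sublattice b"
    by (auto simp: e_def)
  ultimately show "\<exists>z\<in>parity_sublattice b. cmod (z - p) \<le> 1" by blast
qed

lemma exists_admissible_lattices:
  "\<exists>\<eta> L. 0 < \<eta> \<and> (\<forall>\<delta>>0. isoradial \<delta> (L \<delta>) \<and> angles_bounded \<eta> (L \<delta>) \<and>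
      plane_net \<delta> (primal_vertices (L \<delta>)) \<and> plane_net \<delta> (dual_vertices (L \<delta>)))"
proof (intro exI conjI allI impI)
  show "(0::real) < pi / 4" by simp
  fix \<delta> :: real assume "0 < \<delta>"
  then have c: "complex_of_real \<delta> \<noteq> 0" and norm_c: "cmod (complex_of_real \<delta>) = \<delta>" by auto
  let ?L = "map_tile ((*) (complex_of_real \<delta>)) ` square_lattice"
  show "isoradial \<delta> ?L"
    using isoradial_scale[OF c isoradial_square_lattice] norm_c by simp
  show "angles_bounded (pi / 4) ?L"
    using angles_bounded_square_lattice by (simp add: angles_bounded_scale[OF c])
  show "plane_net \<delta> (primal_vertices ?L)" "plane_net \<delta> (dual_vertices ?L)"
    using plane_net_scale[OF c plane_net_parity_sublattice] norm_c
    by (simp_all add: primal_vertices_map_tile dual_vertices_map_tile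
        primal_vertices_square_lattice dual_vertices_square_lattice)
qed

lemma exists_nearby_points:
  assumes "\<forall>\<delta>>0. plane_net \<delta> (S \<delta>)"
  shows "\<exists>f. \<forall>\<delta>>0. length (f \<delta>) = length a \<and>
    (\<forall>j<length a. f \<delta> ! j \<in> S \<delta> \<and> cmod (f \<delta> ! j - a ! j) \<le> \<delta>)"
proof -
  define f where "f \<delta> = map (\<lambda>p. SOME z. z \<in> S \<delta> \<and> cmod (z - p) \<le> \<delta>) a" for \<delta>
  have "f \<delta> ! j \<in> S \<delta> \<and> cmod (f \<delta> ! j - a ! j) \<le> \<delta>" if "0 < \<delta>" "j < length a" for \<delta> j
    using assms that unfolding f_def plane_net_def by (simp add: Bex_def) (rule someI_ex, blast)
  then show ?thesis by (intro exI[of _ f]) (simp add: f_def)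
qed

definition scaling_limit ::
    "(tile set \<Rightarrow> complex set) \<Rightarrow> (real \<Rightarrow> tile set \<Rightarrow> complex list \<Rightarrow> real) \<Rightarrow>
     nat \<Rightarrow> (complex list \<Rightarrow> real) \<Rightarrow> bool" where
  "scaling_limit V E n F \<longleftrightarrow>
     (\<forall>a. length a = n \<and> distinct a \<longrightarrow>
       (\<forall>\<eta> L f. 0 < \<eta> \<and> (\<forall>\<delta>>0. isoradial \<delta> (L \<delta>) \<and> angles_bounded \<eta> (L \<delta>)) \<and>
          (\<forall>\<delta>>0. length (f \<delta>) = n \<and>
             (\<forall>j<n. f \<delta> ! j \<in> V (L \<delta>) \<and> cmod (f \<delta> ! j - a ! j) \<le> \<delta>)) \<longrightarrow>
          ((\<lambda>\<delta>. \<delta> powr (- (real n / 8)) * E \<delta> (L \<delta>) (f \<delta>))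
             \<longlongrightarrow> ising_C ^ n * F a) (at_right 0)))"

lemma plus_scaling_fn_eq:
  "plus_scaling_fn m n F = scaling_limit dual_vertices (\<lambda>\<delta>. E_plus (m * \<delta> / 2)) n F"
  by (simp add: plus_scaling_fn_def scaling_limit_def)

lemma free_scaling_fn_eq:
  "free_scaling_fn m n G = scaling_limit primal_vertices (\<lambda>\<delta>. E_free (- m * \<delta> / 2)) n G"
  by (simp add: free_scaling_fn_def scaling_limit_def)

lemma ising_C_pos: "0 < ising_C"
  by (simp add: ising_C_def)

lemma scaling_limit_rotation_invariant:
  assumes F: "scaling_limit V E n F"
    and V: "\<And>T. V (map_tile ((*) c) ` T) = (*) c ` V T"
    and E: "\<And>\<delta> T fs. E \<delta> (map_tile ((*) c) ` T) (map ((*) c) fs) = E \<delta> T fs"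
    and \<eta>: "0 < \<eta>"
    and L: "\<forall>\<delta>>0. isoradial \<delta> (L \<delta>) \<and> angles_bounded \<eta> (L \<delta>) \<and> plane_net \<delta> (V (L \<delta>))"
    and c: "cmod c = 1" and a: "length a = n" "distinct a"
  shows "F (map ((*) c) a) = F a"
proof -
  have c0: "c \<noteq> 0" using c by auto
  obtain f where f: "\<forall>\<delta>>0. length (f \<delta>) = n \<and>
      (\<forall>j<n. f \<delta> ! j \<in> V (L \<delta>) \<and> cmod (f \<delta> ! j - a ! j) \<le> \<delta>)"
    using exists_nearby_points[of "\<lambda>\<delta>. V (L \<delta>)" a] L a by auto
  have lim:
    "((\<lambda>\<delta>. \<delta> powr (- (real n / 8)) * E \<delta> (M \<delta>) (g \<delta>)) \<longlongrightarrow> ising_C ^ n * F b) (at_right 0)"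
    if "length b = n" "distinct b"
      and "\<forall>\<delta>>0. isoradial \<delta> (M \<delta>) \<and> angles_bounded \<eta> (M \<delta>)"
      and "\<forall>\<delta>>0. length (g \<delta>) = n \<and>
        (\<forall>j<n. g \<delta> ! j \<in> V (M \<delta>) \<and> cmod (g \<delta> ! j - b ! j) \<le> \<delta>)"
    for b M g
    by (rule F[unfolded scaling_limit_def, rule_format]) (use \<eta> that in auto)
  let ?L' = "\<lambda>\<delta>. map_tile ((*) c) ` L \<delta>" and ?f' = "\<lambda>\<delta>. map ((*) c) (f \<delta>)"
  have L': "\<forall>\<delta>>0. isoradial \<delta> (?L' \<delta>) \<and> angles_bounded \<eta> (?L' \<delta>)"
    using L isoradial_scale[OF c0] by (simp add: angles_bounded_scale[OF c0] c)
  have f': "\<forall>\<delta>>0. length (?f' \<delta>) = n \<and>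
      (\<forall>j<n. ?f' \<delta> ! j \<in> V (?L' \<delta>) \<and> cmod (?f' \<delta> ! j - map ((*) c) a ! j) \<le> \<delta>)"
    using f a by (auto simp: V norm_mult c right_diff_distrib[symmetric])
  have distinct_rot: "distinct (map ((*) c) a)"
    using a c0 by (simp add: distinct_map inj_on_def)
  have "((\<lambda>\<delta>. \<delta> powr (- (real n / 8)) * E \<delta> (L \<delta>) (f \<delta>))
      \<longlongrightarrow> ising_C ^ n * F (map ((*) c) a)) (at_right 0)"
    using lim[OF _ distinct_rot L' f'] a by (simp add: E)
  moreover have
    "((\<lambda>\<delta>. \<delta> powr (- (real n / 8)) * E \<delta> (L \<delta>) (f \<delta>)) \<longlongrightarrow> ising_C ^ n * F a) (at_right 0)"
    using lim[of a L f] L f a by simp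
  ultimately have "ising_C ^ n * F (map ((*) c) a) = ising_C ^ n * F a"
    using tendsto_unique trivial_limit_at_right_real by blast
  then show ?thesis using ising_C_pos by simp
qed

theorem corollary1p2:
  fixes m :: real and n :: nat and F G :: "complex list \<Rightarrow> real"
    and \<phi> :: real and a :: "complex list"
  assumes "2 \<le> n" and "m < 0"
    and "plus_scaling_fn m n F" and "free_scaling_fn m n G"
    and "length a = n" and "distinct a"
  shows "ising_C ^ n * F (map (\<lambda>z. cis \<phi> * z) a) = ising_C ^ n * F a \<and>
         ising_C ^ n * G (map (\<lambda>z. cis \<phi> * z) a) = ising_C ^ n * G a"
proof -
  obtain \<eta> L where \<eta>: "0 < \<eta>"
    and L: "\<forall>\<delta>>0. isoradial \<delta> (L \<delta>) \<and> angles_bounded \<eta> (L \<delta>) \<and>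
      plane_net \<delta> (primal_vertices (L \<delta>)) \<and> plane_net \<delta> (dual_vertices (L \<delta>))"
    using exists_admissible_lattices by blast
  have c: "cmod (cis \<phi>) = 1" by simp
  have "F (map ((*) (cis \<phi>)) a) = F a"
    using scaling_limit_rotation_invariant[OF assms(3)[unfolded plus_scaling_fn_eq]
        dual_vertices_map_tile E_plus_rotate[OF c] \<eta> _ c assms(5,6)] L by blast
  moreover have "G (map ((*) (cis \<phi>)) a) = G a"
    using scaling_limit_rotation_invariant[OF assms(4)[unfolded free_scaling_fn_eq]
        primal_vertices_map_tile E_free_rotate[OF c] \<eta> _ c assms(5,6)] L by blast
  ultimately show ?thesis by simp
qed

end
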